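(* Let $L_5$ be the $5$-element linearly ordered set. There are infinitely many pairwise non-equivalent monotone games over $L_5$.
   Context: Games over a poset $A$ of atoms are defined inductively: for each $a\in A$, $[a]$ is a game (atomic); whenever $L,R$ are non-empty sets of games, $\{L\mid R\}$ is a game (composite), with left options the elements of $L$ and right options the elements of $R$. A position of $G$ is $G$ itself, an option of $G$, an option of an option, etc. Relations $\le$ and $\lhd$ on games are defined by mutual recursion: $G\le H$ iff (1) every left option $G^L$ of $G$ satisfies $G^L\lhd H$, (2) every right option $H^R$ of $H$ satisfies $G\lhd H^R$, and (3) if $G$ or $H$ is atomic then $G\lhd H$. $G\lhd H$ iff (1) some right option $G^R$ of $G$ satisfies $G^R\le H$, or (2) some left option $H^L$ of $H$ satisfies $G\le H^L$, or (3) $G=[a]$, $H=[b]$ are atomic with $a\le b$ in $A$. Games $G,H$ are equivalent if $G\le H$ and $H\le G$. A game $G$ is locally monotone if every left option satisfies $G\le G^L$ and every right option satisfies $G^R\le G$; it is monotone if every position of $G$ is locally monotone. *)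

theory Defs
  imports Main "HOL-Library.FSet"
begin

(* Games over a set of atoms of type 'a.  Composite games have finite sets of
   left/right options; non-emptiness of the option sets is imposed by the
   well-formedness predicate wf_game below. *)
datatype 'a game = Atom 'a | Comp "'a game fset" "'a game fset"

fun is_atomic :: "'a game \<Rightarrow> bool" where
  "is_atomic (Atom a) = True"
| "is_atomic (Comp L R) = False"

fun lefts :: "'a game \<Rightarrow> 'a game set" where
  "lefts (Atom a) = {}"
| "lefts (Comp L R) = fset L"

fun rights :: "'a game \<Rightarrow> 'a game set" where
  "rights (Atom a) = {}"
| "rights (Comp L R) = fset R"

inductive_set positions :: "'a game \<Rightarrow> 'a game set" for G where
  self: "G \<in> positions G"
| left: "P \<in> positions G \<Longrightarrow> Q \<in> lefts P \<Longrightarrow> Q \<in> positions G"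
| right: "P \<in> positions G \<Longrightarrow> Q \<in> rights P \<Longrightarrow> Q \<in> positions G"

definition wf_game :: "'a game \<Rightarrow> bool" where
  "wf_game G \<longleftrightarrow> (\<forall>P \<in> positions G. \<not> is_atomic P \<longrightarrow> lefts P \<noteq> {} \<and> rights P \<noteq> {})"

(* the relations \<le> and \<lhd>, relative to the order leA on the atoms, defined by
   mutual (well-founded) recursion; since the recursion is well-founded the
   least fixed point below is the unique solution of the defining clauses *)
inductive game_le :: "('a \<Rightarrow> 'a \<Rightarrow> bool) \<Rightarrow> 'a game \<Rightarrow> 'a game \<Rightarrow> bool"
  and game_lf :: "('a \<Rightarrow> 'a \<Rightarrow> bool) \<Rightarrow> 'a game \<Rightarrow> 'a game \<Rightarrow> bool"
  for leA where
  le_intro: "\<lbrakk> \<forall>GL. GL \<in> lefts G \<longrightarrow> game_lf leA GL H;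
              \<forall>HR. HR \<in> rights H \<longrightarrow> game_lf leA G HR;
              is_atomic G \<or> is_atomic H \<longrightarrow> game_lf leA G H \<rbrakk>
             \<Longrightarrow> game_le leA G H"
| lf_right: "\<lbrakk> GR \<in> rights G; game_le leA GR H \<rbrakk> \<Longrightarrow> game_lf leA G H"
| lf_left: "\<lbrakk> HL \<in> lefts H; game_le leA G HL \<rbrakk> \<Longrightarrow> game_lf leA G H"
| lf_atom: "leA a b \<Longrightarrow> game_lf leA (Atom a) (Atom b)"

definition game_equiv :: "('a \<Rightarrow> 'a \<Rightarrow> bool) \<Rightarrow> 'a game \<Rightarrow> 'a game \<Rightarrow> bool" where
  "game_equiv leA G H \<longleftrightarrow> game_le leA G H \<and> game_le leA H G"

definition locally_monotone :: "('a \<Rightarrow> 'a \<Rightarrow> bool) \<Rightarrow> 'a game \<Rightarrow> bool" where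
  "locally_monotone leA G \<longleftrightarrow>
     (\<forall>GL \<in> lefts G. game_le leA G GL) \<and> (\<forall>GR \<in> rights G. game_le leA GR G)"

definition monotone_game :: "('a \<Rightarrow> 'a \<Rightarrow> bool) \<Rightarrow> 'a game \<Rightarrow> bool" where
  "monotone_game leA G \<longleftrightarrow> (\<forall>P \<in> positions G. locally_monotone leA P)"

datatype L5 = A0 | A1 | A2 | A3 | A4

fun L5_idx :: "L5 \<Rightarrow> nat" where
  "L5_idx A0 = 0" | "L5_idx A1 = 1" | "L5_idx A2 = 2" | "L5_idx A3 = 3" | "L5_idx A4 = 4"

definition L5_le :: "L5 \<Rightarrow> L5 \<Rightarrow> bool" where
  "L5_le a b \<longleftrightarrow> L5_idx a \<le> L5_idx b"

end

theory Submission
  imports Defs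
begin

(* The games are G 0 = [1] and G (n+1) = {{K | {{[3] | G n} | [0]}} | [0]} with K = {[4] | [2]}.
   Each G n satisfies a handful of comparisons with atoms and with {[3] | G n}, which are
   inherited by G (n+1) and are exactly what makes every new position locally monotone.
   Among them is  not [2] <| G n,  which rules out the cross comparisons between the
   building blocks; what remains is a recursion for comparing two successors, and an
   induction on i shows that G i <= G j fails whenever i < j. *)

lemma game_le_iff:
  "game_le leA G H \<longleftrightarrow>
     (\<forall>GL\<in>lefts G. game_lf leA GL H) \<and> (\<forall>HR\<in>rights H. game_lf leA G HR) \<and>
     (is_atomic G \<or> is_atomic H \<longrightarrow> game_lf leA G H)"
  by (subst game_le.simps) blast

lemma game_lf_iff:
  "game_lf leA G H \<longleftrightarrow>
     (\<exists>GR\<in>rights G. game_le leA GR H) \<or> (\<exists>HL\<in>lefts H. game_le leA G HL) \<or>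
     (\<exists>a b. G = Atom a \<and> H = Atom b \<and> leA a b)"
  by (subst game_lf.simps) blast

lemma game_lf_Atom_Atom [simp]: "game_lf leA (Atom a) (Atom b) \<longleftrightarrow> leA a b"
  by (simp add: game_lf_iff)

lemma game_lf_Atom_Comp [simp]:
  "game_lf leA (Atom a) (Comp L R) \<longleftrightarrow> (\<exists>HL\<in>fset L. game_le leA (Atom a) HL)"
  by (subst game_lf_iff) simp

lemma game_lf_Comp_Atom [simp]:
  "game_lf leA (Comp L R) (Atom b) \<longleftrightarrow> (\<exists>GR\<in>fset R. game_le leA GR (Atom b))"
  by (subst game_lf_iff) simp

lemma game_lf_Comp_Comp [simp]:
  "game_lf leA (Comp L R) (Comp L' R') \<longleftrightarrow>
     (\<exists>GR\<in>fset R. game_le leA GR (Comp L' R')) \<or> (\<exists>HL\<in>fset L'. game_le leA (Comp L R) HL)"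
  by (subst game_lf_iff) simp

lemma game_le_Atom_Atom [simp]: "game_le leA (Atom a) (Atom b) \<longleftrightarrow> leA a b"
  by (subst game_le_iff) simp

lemma game_le_Atom_Comp [simp]:
  "game_le leA (Atom a) (Comp L R) \<longleftrightarrow>
     (\<forall>HR\<in>fset R. game_lf leA (Atom a) HR) \<and> (\<exists>HL\<in>fset L. game_le leA (Atom a) HL)"
  by (subst game_le_iff) simp

lemma game_le_Comp_Atom [simp]:
  "game_le leA (Comp L R) (Atom b) \<longleftrightarrow>
     (\<forall>GL\<in>fset L. game_lf leA GL (Atom b)) \<and> (\<exists>GR\<in>fset R. game_le leA GR (Atom b))"
  by (subst game_le_iff) simp

lemma game_le_Comp_Comp [simp]:
  "game_le leA (Comp L R) (Comp L' R') \<longleftrightarrow>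
     (\<forall>GL\<in>fset L. game_lf leA GL (Comp L' R')) \<and> (\<forall>HR\<in>fset R'. game_lf leA (Comp L R) HR)"
  by (subst game_le_iff) simp

lemma game_lf_Comp_rightI:
  "\<exists>GR\<in>fset R. game_le leA GR H \<Longrightarrow> game_lf leA (Comp L R) H"
  by (simp add: game_lf_iff)

lemma game_lf_Comp_leftI:
  "\<exists>HL\<in>fset L. game_le leA G HL \<Longrightarrow> game_lf leA G (Comp L R)"
  by (simp add: game_lf_iff)

lemma game_le_refl:
  assumes "\<And>a. leA a a"
  shows "game_le leA G G"
proof (induction G)
  case (Atom a)
  show ?case using assms by simp
next
  case (Comp L R)
  then show ?case by (auto simp: game_lf_iff)
qed

lemma positions_trans: "Q \<in> positions P \<Longrightarrow> P \<in> positions G \<Longrightarrow> Q \<in> positions G"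
  by (induction Q rule: positions.induct) (auto intro: positions.intros)

lemma positions_Atom [simp]: "positions (Atom a) = {Atom a}"
proof -
  have "P \<in> positions (Atom a) \<Longrightarrow> P = Atom a" for P
    by (induction P rule: positions.induct) auto
  then show ?thesis by (auto intro: positions.self)
qed

lemma positions_Comp [simp]:
  "positions (Comp L R) = insert (Comp L R) (\<Union>X\<in>fset L \<union> fset R. positions X)"
proof
  show "positions (Comp L R) \<subseteq> insert (Comp L R) (\<Union>X\<in>fset L \<union> fset R. positions X)"
  proof
    fix P assume "P \<in> positions (Comp L R)"
    then show "P \<in> insert (Comp L R) (\<Union>X\<in>fset L \<union> fset R. positions X)"
      by (induction P rule: positions.induct) (auto intro: positions.intros)
  qed
next
  have "X \<in> positions (Comp L R)" if "X \<in> fset L \<union> fset R" for X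
    using that positions.left[OF positions.self, of X "Comp L R"]
      positions.right[OF positions.self, of X "Comp L R"] by auto
  then show "insert (Comp L R) (\<Union>X\<in>fset L \<union> fset R. positions X) \<subseteq> positions (Comp L R)"
    by (auto intro: positions.self positions_trans)
qed

lemma monotone_game_Atom [simp]: "monotone_game leA (Atom a)"
  by (simp add: monotone_game_def locally_monotone_def)

lemma monotone_game_Comp [simp]:
  "monotone_game leA (Comp L R) \<longleftrightarrow>
     locally_monotone leA (Comp L R) \<and> (\<forall>X\<in>fset L \<union> fset R. monotone_game leA X)"
  by (auto simp: monotone_game_def)

lemma wf_game_Atom [simp]: "wf_game (Atom a)"
  by (simp add: wf_game_def)

lemma wf_game_Comp [simp]:
  "wf_game (Comp L R) \<longleftrightarrow> fset L \<noteq> {} \<and> fset R \<noteq> {} \<and> (\<forall>X\<in>fset L \<union> fset R. wf_game X)"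
  by (auto simp: wf_game_def)

abbreviation le5 where "le5 \<equiv> game_le L5_le"
abbreviation lf5 where "lf5 \<equiv> game_lf L5_le"

definition game_K :: "L5 game" where "game_K = Comp {|Atom A4|} {|Atom A2|}"
definition game_D :: "L5 game \<Rightarrow> L5 game" where "game_D X = Comp {|Atom A3|} {|X|}"
definition game_C :: "L5 game \<Rightarrow> L5 game" where "game_C X = Comp {|game_D X|} {|Atom A0|}"
definition game_B :: "L5 game \<Rightarrow> L5 game" where "game_B X = Comp {|game_K|} {|game_C X|}"
definition game_step :: "L5 game \<Rightarrow> L5 game" where "game_step X = Comp {|game_B X|} {|Atom A0|}"

lemmas game_step_defs = game_K_def game_D_def game_C_def game_B_def game_step_def L5_le_def

lemma lf_A2_game_step_iff: "lf5 (Atom A2) (game_step X) \<longleftrightarrow> lf5 (Atom A2) X"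
  by (simp add: game_step_defs)

lemma game_step_le_game_step_iff:
  assumes "\<not> lf5 (Atom A2) Y"
  shows "le5 (game_step X) (game_step Y) \<longleftrightarrow> le5 X (game_step Y) \<or> le5 (game_C X) (game_C Y)"
  using assms by (simp add: game_step_defs)

lemma game_step_le_game_C_iff:
  assumes "\<not> lf5 (Atom A2) Y"
  shows "le5 (game_step X) (game_C Y) \<longleftrightarrow> le5 (game_C X) (game_C Y)"
  using assms by (simp add: game_step_defs)

lemma game_C_le_game_C_game_step_iff:
  "le5 (game_C X) (game_C (game_step Y)) \<longleftrightarrow> le5 X (game_C (game_step Y)) \<or> le5 X (game_step Y)"
  by (simp add: game_step_defs)

definition step_invariant :: "L5 game \<Rightarrow> bool" where
  "step_invariant X \<longleftrightarrow> le5 (Atom A0) X \<and> lf5 (Atom A0) X \<and> le5 X (Atom A2) \<and> le5 X (Atom A3)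
     \<and> le5 X (game_D X) \<and> \<not> lf5 (Atom A2) X"

lemma step_invariant_A1: "step_invariant (Atom A1)"
  by (simp add: step_invariant_def game_step_defs)

lemma step_invariant_game_step: "step_invariant X \<Longrightarrow> step_invariant (game_step X)"
  unfolding step_invariant_def by (simp add: game_step_defs)

lemma monotone_game_step:
  "step_invariant X \<Longrightarrow> monotone_game L5_le X \<Longrightarrow> monotone_game L5_le (game_step X)"
  unfolding step_invariant_def
  by (simp add: game_step_defs locally_monotone_def game_lf_Comp_rightI game_lf_Comp_leftI)

lemma wf_game_step: "wf_game X \<Longrightarrow> wf_game (game_step X)"
  by (simp add: game_step_defs)

primrec mono_game_seq :: "nat \<Rightarrow> L5 game" where
  "mono_game_seq 0 = Atom A1"
| "mono_game_seq (Suc n) = game_step (mono_game_seq n)"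

lemma step_invariant_mono_game_seq: "step_invariant (mono_game_seq n)"
  by (induction n) (simp_all add: step_invariant_A1 step_invariant_game_step)

lemma wf_monotone_mono_game_seq: "wf_game (mono_game_seq n) \<and> monotone_game L5_le (mono_game_seq n)"
  by (induction n) (simp_all add: wf_game_step monotone_game_step step_invariant_mono_game_seq)

lemma not_le_mono_game_seq:
  assumes "i < j"
  shows "\<not> le5 (mono_game_seq i) (mono_game_seq j) \<and>
    \<not> le5 (mono_game_seq i) (game_C (mono_game_seq j)) \<and>
    \<not> le5 (game_C (mono_game_seq i)) (game_C (mono_game_seq j))"
  using assms
proof (induction i arbitrary: j)
  case 0
  then obtain l where "j = Suc l" by (cases j) auto
  then show ?case by (simp add: game_step_defs)
next
  case (Suc k)
  then obtain l where j: "j = Suc l" and "k < l" by (cases j) auto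
  then obtain m where l: "l = Suc m" by (cases l) auto
  have "\<not> lf5 (Atom A2) (mono_game_seq n)" for n
    using step_invariant_mono_game_seq step_invariant_def by blast
  then show ?case using Suc.IH[of j] Suc.IH[of l] \<open>k < l\<close> \<open>Suc k < j\<close> unfolding j l
    by (simp add: game_step_le_game_step_iff game_step_le_game_C_iff game_C_le_game_C_game_step_iff
        lf_A2_game_step_iff)
qed

lemma mono_game_seq_not_equiv:
  assumes "i \<noteq> j"
  shows "\<not> game_equiv L5_le (mono_game_seq i) (mono_game_seq j)"
proof (cases "i < j")
  case True
  then show ?thesis using not_le_mono_game_seq unfolding game_equiv_def by blast
next
  case False
  with assms have "j < i" by simp
  then show ?thesis using not_le_mono_game_seq unfolding game_equiv_def by blast
qed

lemma inj_mono_game_seq: "inj mono_game_seq"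
proof (rule injI)
  fix i j assume eq: "mono_game_seq i = mono_game_seq j"
  have "le5 (mono_game_seq i) (mono_game_seq i)"
    by (rule game_le_refl) (simp add: L5_le_def)
  then have "game_equiv L5_le (mono_game_seq i) (mono_game_seq j)"
    unfolding game_equiv_def eq by simp
  then show "i = j" using mono_game_seq_not_equiv by blast
qed

theorem corollary3p5:
  shows "\<exists>S :: L5 game set. infinite S \<and>
           (\<forall>G \<in> S. wf_game G \<and> monotone_game L5_le G) \<and>
           (\<forall>G \<in> S. \<forall>H \<in> S. G \<noteq> H \<longrightarrow> \<not> game_equiv L5_le G H)"
proof (intro exI conjI)
  show "infinite (range mono_game_seq)"
  proof
    assume "finite (range mono_game_seq)"
    then have "finite (UNIV :: nat set)"
      using inj_mono_game_seq by (rule finite_imageD)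
    then show False by simp
  qed
  show "\<forall>G \<in> range mono_game_seq. wf_game G \<and> monotone_game L5_le G"
    using wf_monotone_mono_game_seq by auto
  show "\<forall>G \<in> range mono_game_seq. \<forall>H \<in> range mono_game_seq. G \<noteq> H \<longrightarrow> \<not> game_equiv L5_le G H"
    using mono_game_seq_not_equiv by (metis rangeE)
qed

end
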